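(* Let $\Lambda$ be a set with $\operatorname{Card}\Lambda\geq\aleph$ and let $(Y,\tau_d)$ be any dendrite. Then there exists an upper semicontinuous decomposition $\mathcal D$ of $(\{0,1\}^\Lambda,\tau_0^\Lambda)$ whose decomposition space $(\mathcal D,\tau(\mathcal D))$ is homeomorphic to $Y$; in particular $(\mathcal D,\tau(\mathcal D))$ is a metrizable space which is a dendrite, although $(\{0,1\}^\Lambda,\tau_0^\Lambda)$ itself is not metrizable.
   Context: $\{0,1\}^\Lambda=\{\varphi:\Lambda\to\{0,1\}\}$ carries the topology $\tau_0^\Lambda$, the product topology of the discrete topology $\tau_0$ on $\{0,1\}$ (base: sets $\{\varphi;\ \varphi(\lambda_i)\in G_{\lambda_i},\ i=1,\dots,n\}$ with $G_{\lambda_i}\subset\{0,1\}$, finitely many $\lambda_i\in\Lambda$). A dendrite is a locally connected, connected, compact metric space containing no simple closed curve. A decomposition $\mathcal D$ of $X$ is a collection of nonempty pairwise disjoint subsets with union $X$; the decomposition topology is $\tau(\mathcal D)=\{\mathcal U\subset\mathcal D;\ \bigcup_{D\in\mathcal U}D \text{ open in } X\}$. $\mathcal D$ is upper semicontinuous if for every $D\in\mathcal D$ and open $U\supseteq D$ there is an open $u\supseteq D$ with $A\subset U$ for all $A\in\mathcal D$ meeting $u$. *)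

theory Defs
  imports "HOL-Analysis.Analysis"
begin

definition cantor_cube :: "'i set \<Rightarrow> ('i \<Rightarrow> nat) topology" where
  "cantor_cube L = product_topology (\<lambda>_. discrete_topology {0::nat, 1}) L"

definition decomposition :: "'a topology \<Rightarrow> 'a set set \<Rightarrow> bool" where
  "decomposition X D \<longleftrightarrow> (\<forall>A\<in>D. A \<noteq> {}) \<and> pairwise disjnt D \<and> \<Union>D = topspace X"

definition decomposition_topology :: "'a topology \<Rightarrow> 'a set set \<Rightarrow> 'a set topology" where
  "decomposition_topology X D = topology (\<lambda>U. U \<subseteq> D \<and> openin X (\<Union>U))"

definition upper_semicontinuous_decomposition :: "'a topology \<Rightarrow> 'a set set \<Rightarrow> bool" where
  "upper_semicontinuous_decomposition X D \<longleftrightarrow> decomposition X D \<and>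
     (\<forall>E\<in>D. \<forall>U. openin X U \<and> E \<subseteq> U \<longrightarrow>
        (\<exists>u. openin X u \<and> E \<subseteq> u \<and> (\<forall>A\<in>D. A \<inter> u \<noteq> {} \<longrightarrow> A \<subseteq> U)))"

definition dendrite :: "'a::metric_space set \<Rightarrow> bool" where
  "dendrite Y \<longleftrightarrow> Y \<noteq> {} \<and> compact Y \<and> connected Y \<and> locally connected Y \<and>
     \<not> (\<exists>C. C \<subseteq> Y \<and> C homeomorphic (sphere (0::complex) 1))"

end

theory Submission
  imports Defs
begin

text \<open>Only compactness of the dendrite \<open>Y\<close> matters. Countably many coordinates of the Cantor cube
  code a sequence of points taken from finer and finer finite nets of \<open>Y\<close>; after damping the jumps of
  this sequence it converges uniformly in the code, so its limit is a continuous surjection \<open>G\<close> from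
  the cube onto \<open>Y\<close>. As the cube is compact and \<open>Y\<close> Hausdorff, \<open>G\<close> is a closed quotient map, so the
  fibres of \<open>G\<close> form an upper semicontinuous decomposition whose decomposition space is homeomorphic
  to \<open>Y\<close>. The cube itself is an uncountable product of non-trivial spaces, hence not metrizable.\<close>

lemma Union_Int_pairwise_disjnt:
  assumes "pairwise disjnt D" "U \<subseteq> D" "V \<subseteq> D"
  shows "\<Union>(U \<inter> V) = \<Union>U \<inter> \<Union>V"
proof
  show "\<Union>U \<inter> \<Union>V \<subseteq> \<Union>(U \<inter> V)"
  proof
    fix x assume "x \<in> \<Union>U \<inter> \<Union>V"
    then obtain A B where "A \<in> U" "B \<in> V" "x \<in> A" "x \<in> B"
      by blast
    moreover from this assms have "A = B"
      unfolding pairwise_def disjnt_def by blast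
    ultimately show "x \<in> \<Union>(U \<inter> V)"
      by blast
  qed
qed blast

lemma openin_decomposition_topology:
  assumes "pairwise disjnt D"
  shows "openin (decomposition_topology X D) U \<longleftrightarrow> U \<subseteq> D \<and> openin X (\<Union>U)"
proof -
  have "istopology (\<lambda>U. U \<subseteq> D \<and> openin X (\<Union>U))"
    unfolding istopology_def
  proof (rule conjI; intro allI impI)
    fix U V assume "U \<subseteq> D \<and> openin X (\<Union>U)" "V \<subseteq> D \<and> openin X (\<Union>V)"
    then show "U \<inter> V \<subseteq> D \<and> openin X (\<Union>(U \<inter> V))"
      using Union_Int_pairwise_disjnt[OF assms] by auto
  next
    fix \<K> assume "\<forall>U\<in>\<K>. U \<subseteq> D \<and> openin X (\<Union>U)"
    moreover have "\<Union>(\<Union>\<K>) = \<Union>(Union ` \<K>)" by blast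
    ultimately show "\<Union>\<K> \<subseteq> D \<and> openin X (\<Union>(\<Union>\<K>))"
      by (auto intro: openin_Union)
  qed
  then show ?thesis
    unfolding decomposition_topology_def by simp
qed

lemma topspace_decomposition_topology:
  assumes "decomposition X D"
  shows "topspace (decomposition_topology X D) = D"
proof
  have disj: "pairwise disjnt D" and cover: "\<Union>D = topspace X"
    using assms by (auto simp: decomposition_def)
  show "topspace (decomposition_topology X D) \<subseteq> D"
    using openin_decomposition_topology[OF disj] openin_topspace by blast
  have "openin (decomposition_topology X D) D"
    by (simp add: openin_decomposition_topology[OF disj] cover)
  then show "D \<subseteq> topspace (decomposition_topology X D)"
    by (rule openin_subset)
qed

lemma quotient_map_decomposition_topology:
  assumes D: "decomposition X D" and p: "\<And>x. x \<in> topspace X \<Longrightarrow> x \<in> p x \<and> p x \<in> D"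
  shows "quotient_map X (decomposition_topology X D) p"
proof -
  have disj: "pairwise disjnt D" and cover: "\<Union>D = topspace X" and ne: "\<forall>A\<in>D. A \<noteq> {}"
    using D by (auto simp: decomposition_def)
  have member: "p x = A" if "A \<in> D" "x \<in> A" for x A
    using that p[of x] cover disj by (auto simp: pairwise_def disjnt_def)
  have image: "p ` topspace X = D"
  proof
    show "p ` topspace X \<subseteq> D"
      using p by blast
    show "D \<subseteq> p ` topspace X"
    proof
      fix A assume "A \<in> D"
      then obtain x where "x \<in> A"
        using ne by blast
      with \<open>A \<in> D\<close> have "x \<in> topspace X" "p x = A"
        using cover member by auto
      then show "A \<in> p ` topspace X"
        by blast
    qed
  qed
  have preimage: "{x \<in> topspace X. p x \<in> U} = \<Union>U" if "U \<subseteq> D" for U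
  proof
    show "{x \<in> topspace X. p x \<in> U} \<subseteq> \<Union>U"
      using p by blast
    show "\<Union>U \<subseteq> {x \<in> topspace X. p x \<in> U}"
    proof
      fix x assume "x \<in> \<Union>U"
      then obtain A where "A \<in> U" "x \<in> A"
        by blast
      with that have "A \<in> D"
        by blast
      with \<open>x \<in> A\<close> have "x \<in> topspace X" "p x = A"
        using cover member by auto
      with \<open>A \<in> U\<close> show "x \<in> {x \<in> topspace X. p x \<in> U}"
        by simp
    qed
  qed
  show ?thesis
    unfolding quotient_map_def topspace_decomposition_topology[OF D]
  proof (intro conjI allI impI image)
    fix U assume "U \<subseteq> D"
    then show "openin X {x \<in> topspace X. p x \<in> U} \<longleftrightarrow> openin (decomposition_topology X D) U"
      by (simp add: preimage openin_decomposition_topology[OF disj])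
  qed
qed

definition fibre_decomposition :: "'a topology \<Rightarrow> ('a \<Rightarrow> 'b) \<Rightarrow> 'a set set" where
  "fibre_decomposition X f = (\<lambda>y. {x \<in> topspace X. f x = y}) ` f ` topspace X"

lemma decomposition_fibre_decomposition: "decomposition X (fibre_decomposition X f)"
  unfolding decomposition_def fibre_decomposition_def pairwise_def disjnt_def by auto

lemma homeomorphic_space_fibre_decomposition:
  assumes f: "quotient_map X Y f"
  shows "decomposition_topology X (fibre_decomposition X f) homeomorphic_space Y"
proof -
  define D where "D = fibre_decomposition X f"
  define p where "p x = {x' \<in> topspace X. f x' = f x}" for x
  define \<phi> where "\<phi> A = f (SOME x. x \<in> A)" for A
  have D: "decomposition X D"
    by (simp add: D_def decomposition_fibre_decomposition)
  have p: "quotient_map X (decomposition_topology X D) p"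
  proof (rule quotient_map_decomposition_topology[OF D])
    fix x assume x: "x \<in> topspace X"
    then have "p x \<in> D"
      unfolding D_def fibre_decomposition_def p_def by (intro imageI)
    with x show "x \<in> p x \<and> p x \<in> D"
      by (simp add: p_def)
  qed
  have \<phi>p: "\<phi> (p x) = f x" if "x \<in> topspace X" for x
  proof -
    have "(SOME x'. x' \<in> p x) \<in> p x"
      unfolding some_in_eq using that by (auto simp: p_def)
    then show ?thesis
      by (simp add: \<phi>_def p_def)
  qed
  have "quotient_map X Y (\<phi> \<circ> p)"
    using quotient_map_eq[OF f, of "\<phi> \<circ> p"] \<phi>p by simp
  then have "quotient_map (decomposition_topology X D) Y \<phi>"
    by (rule quotient_map_compose_eq[OF p, THEN iffD1])
  moreover have "inj_on \<phi> D"
  proof (rule inj_onI)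
    fix A B assume "A \<in> D" "B \<in> D" "\<phi> A = \<phi> B"
    moreover have "\<exists>a \<in> topspace X. A = p a" if "A \<in> D" for A
      using that by (auto simp: D_def fibre_decomposition_def p_def)
    ultimately obtain a b where "a \<in> topspace X" "b \<in> topspace X" "A = p a" "B = p b"
      by metis
    with \<open>\<phi> A = \<phi> B\<close> show "A = B"
      by (simp add: \<phi>p) (simp add: p_def)
  qed
  ultimately have "homeomorphic_map (decomposition_topology X D) Y \<phi>"
    by (simp add: homeomorphic_map_def topspace_decomposition_topology[OF D])
  then show ?thesis
    unfolding D_def by (rule homeomorphic_map_imp_homeomorphic_space)
qed

lemma upper_semicontinuous_fibre_decomposition:
  assumes cont: "continuous_map X Y f" and closed: "closed_map X Y f"
  shows "upper_semicontinuous_decomposition X (fibre_decomposition X f)"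
  unfolding upper_semicontinuous_decomposition_def
proof (intro conjI ballI allI impI decomposition_fibre_decomposition)
  fix E U assume "E \<in> fibre_decomposition X f" and U: "openin X U \<and> E \<subseteq> U"
  then obtain y where E: "E = {x \<in> topspace X. f x = y}"
    by (auto simp: fibre_decomposition_def)
  \<comment> \<open>Saturating the complement of \<open>U\<close> keeps it closed because \<open>f\<close> is closed and continuous.\<close>
  define u where "u = topspace X - {x \<in> topspace X. f x \<in> f ` (topspace X - U)}"
  have "closedin Y (f ` (topspace X - U))"
    using closed U by (auto simp: closed_map_def)
  then have "openin X u"
    unfolding u_def using closedin_continuous_map_preimage[OF cont] by blast
  moreover have "E \<subseteq> u"
    using U by (auto simp: E u_def)
  moreover have "A \<subseteq> U" if A: "A \<in> fibre_decomposition X f" and Au: "A \<inter> u \<noteq> {}" for A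
  proof
    fix z assume "z \<in> A"
    obtain a where "a \<in> A" "a \<in> u"
      using Au by blast
    with \<open>z \<in> A\<close> A have "z \<in> topspace X" "f z = f a" "f a \<notin> f ` (topspace X - U)"
      by (auto simp: fibre_decomposition_def u_def)
    then show "z \<in> U"
      by (metis DiffI image_eqI)
  qed
  ultimately show "\<exists>u. openin X u \<and> E \<subseteq> u \<and>
      (\<forall>A\<in>fibre_decomposition X f. A \<inter> u \<noteq> {} \<longrightarrow> A \<subseteq> U)"
    by blast
qed

lemma topspace_cantor_cube: "topspace (cantor_cube L) = PiE L (\<lambda>_. {0, 1})"
  by (simp add: cantor_cube_def)

lemma compact_space_cantor_cube: "compact_space (cantor_cube L)"
  by (simp add: cantor_cube_def compact_space_product_topology compact_space_discrete_topology)

lemma not_metrizable_cantor_cube: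
  assumes "uncountable L"
  shows "\<not> metrizable_space (cantor_cube L)"
proof -
  have "(\<lambda>i\<in>L. 0) \<in> topspace (cantor_cube L)"
    by (simp add: topspace_cantor_cube)
  then have "cantor_cube L \<noteq> trivial_topology"
    by auto
  moreover have "{i \<in> L. \<not> (\<exists>a. topspace (discrete_topology {0::nat, 1}) \<subseteq> {a})} = L"
    by auto
  ultimately show ?thesis
    using assms by (simp add: cantor_cube_def metrizable_space_product_topology)
qed

lemma continuous_map_discrete_product_finitely_determined:
  fixes S :: "'i \<Rightarrow> 'b set" and I :: "'i set"
  defines "P \<equiv> product_topology (\<lambda>i. discrete_topology (S i)) I"
  assumes "finite T" and f: "f \<in> topspace P \<rightarrow> topspace Z"
    and det: "\<And>x y. \<lbrakk>x \<in> topspace P; y \<in> topspace P; \<forall>i\<in>T. x i = y i\<rbrakk> \<Longrightarrow> f x = f y"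
  shows "continuous_map P Z f"
  unfolding continuous_map_def
proof (intro conjI allI impI f)
  fix V assume V: "openin Z V"
  show "openin P {x \<in> topspace P. f x \<in> V}"
  proof (subst openin_subopen, intro ballI)
    fix x assume x: "x \<in> {x \<in> topspace P. f x \<in> V}"
    \<comment> \<open>The cylinder fixing the coordinates in \<open>T\<close> is a neighbourhood of \<open>x\<close> on which \<open>f\<close> is constant.\<close>
    define C where "C = PiE I (\<lambda>i. if i \<in> T then {x i} else S i)"
    have xP: "x \<in> PiE I S"
      using x by (simp add: P_def)
    have "openin P C"
      unfolding P_def C_def openin_PiE_gen
      using xP by (intro disjI2 conjI ballI) (auto simp: PiE_iff intro: finite_subset[OF _ \<open>finite T\<close>])
    moreover have "x \<in> C"
      using xP by (auto simp: C_def PiE_iff)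
    moreover have "C \<subseteq> {x \<in> topspace P. f x \<in> V}"
    proof
      fix y assume y: "y \<in> C"
      have "C \<subseteq> PiE I S"
        unfolding C_def using xP by (intro PiE_mono) (auto simp: PiE_iff)
      with y have yP: "y \<in> topspace P"
        by (auto simp: P_def)
      have "y i = x i" if "i \<in> T" for i
      proof (cases "i \<in> I")
        case True
        then show ?thesis
          using PiE_mem[OF y[unfolded C_def] True] that by simp
      next
        case False
        then show ?thesis
          using y xP by (metis C_def PiE_arb)
      qed
      then have "f y = f x"
        using det[OF yP, of x] x by simp
      then show "y \<in> {x \<in> topspace P. f x \<in> V}"
        using x yP by simp
    qed
    ultimately show "\<exists>C. openin P C \<and> x \<in> C \<and> C \<subseteq> {x \<in> topspace P. f x \<in> V}"
      by blast
  qed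
qed

definition block_decode :: "(nat \<Rightarrow> nat \<Rightarrow> 'i) \<Rightarrow> (nat \<Rightarrow> nat) \<Rightarrow> ('i \<Rightarrow> nat) \<Rightarrow> nat \<Rightarrow> nat" where
  "block_decode b m x n = Max (insert 0 {j. j < m n \<and> x (b n j) = 1})"

lemma block_decode_less: "0 < m n \<Longrightarrow> block_decode b m x n < m n"
  by (simp add: block_decode_def)

lemma block_decode_cong:
  assumes "\<And>j. j < m n \<Longrightarrow> x (b n j) = y (b n j)"
  shows "block_decode b m x n = block_decode b m y n"
proof -
  have "{j. j < m n \<and> x (b n j) = 1} = {j. j < m n \<and> y (b n j) = 1}"
    using assms by auto
  then show ?thesis
    by (simp add: block_decode_def)
qed

lemma block_decode_surj:
  fixes b :: "nat \<Rightarrow> nat \<Rightarrow> 'i" and L :: "'i set"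
  assumes b_inj: "\<And>n j n' j'. b n j = b n' j' \<Longrightarrow> n = n' \<and> j = j'" and b_L: "\<And>n j. b n j \<in> L"
    and k: "\<And>n. k n < m n"
  obtains x where "x \<in> topspace (cantor_cube L)" "block_decode b m x = k"
proof
  define x :: "'i \<Rightarrow> nat"
    where "x i = (if i \<in> L then if i \<in> range (\<lambda>n. b n (k n)) then 1 else 0 else undefined)" for i
  show "x \<in> topspace (cantor_cube L)"
    by (simp add: topspace_cantor_cube x_def PiE_iff extensional_def)
  have "x (b n j) = 1 \<longleftrightarrow> j = k n" for n j
    using b_L by (auto simp: x_def dest: b_inj)
  then have "{j. j < m n \<and> x (b n j) = 1} = {k n}" for n
    using k by auto
  then show "block_decode b m x = k"
    by (simp add: block_decode_def fun_eq_iff)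
qed

lemma cantor_cube_onto_product_of_finite:
  fixes c :: "nat \<Rightarrow> 'i" and F :: "nat \<Rightarrow> 'a set"
  defines "P \<equiv> product_topology (\<lambda>n. discrete_topology (F n)) UNIV"
  assumes c: "inj c" "range c \<subseteq> L" and F: "\<And>n. finite (F n)" "\<And>n. F n \<noteq> {}"
  obtains g where "continuous_map (cantor_cube L) P g" "g ` topspace (cantor_cube L) = topspace P"
proof -
  have "\<forall>n. \<exists>h. bij_betw h {..<card (F n)} (F n)"
    using ex_bij_betw_nat_finite[OF F(1)] by (simp add: atLeast0LessThan)
  then obtain h where h: "\<And>n. bij_betw (h n) {..<card (F n)} (F n)"
    by metis
  \<comment> \<open>The \<open>n\<close>-th coordinate of the image is read off the block of coordinates \<open>b n j\<close>, \<open>j < card (F n)\<close>.\<close>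
  define b where "b n j = c (prod_encode (n, j))" for n j
  define m where "m n = card (F n)" for n
  define g where "g x n = h n (block_decode b m x n)" for x n
  have b_inj: "b n j = b n' j' \<Longrightarrow> n = n' \<and> j = j'" for n j n' j'
    using c(1) by (simp add: b_def inj_eq prod_encode_eq)
  have b_L: "b n j \<in> L" for n j
    using c(2) by (auto simp: b_def)
  have "block_decode b m x n < m n" for x n
    using F by (intro block_decode_less) (simp add: m_def card_gt_0_iff)
  then have g_in: "g x n \<in> F n" for x n
    using h[of n] by (auto simp: g_def m_def bij_betw_def)
  have "continuous_map (cantor_cube L) (discrete_topology (F n)) (\<lambda>x. g x n)" for n
    unfolding cantor_cube_def
  proof (rule continuous_map_discrete_product_finitely_determined)
    show "finite (b n ` {..<m n})"
      by simp
    fix x y :: "'i \<Rightarrow> nat"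
    assume "\<forall>i\<in>b n ` {..<m n}. x i = y i"
    then show "g x n = g y n"
      unfolding g_def by (intro arg_cong[where f = "h n"] block_decode_cong) auto
  qed (use g_in in auto)
  then have "continuous_map (cantor_cube L) P g"
    by (simp add: P_def continuous_map_componentwise_UNIV)
  moreover have "topspace P \<subseteq> g ` topspace (cantor_cube L)"
  proof
    fix \<sigma> assume "\<sigma> \<in> topspace P"
    then have \<sigma>: "\<sigma> n \<in> h n ` {..<m n}" for n
      using h[of n] by (simp add: P_def m_def PiE_iff bij_betw_def)
    define k where "k n = inv_into {..<m n} (h n) (\<sigma> n)" for n
    have k_less: "k n < m n" for n
      unfolding k_def using inv_into_into[OF \<sigma>[of n]] by simp
    obtain x where x: "x \<in> topspace (cantor_cube L)" "block_decode b m x = k"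
      using block_decode_surj[where b = b and m = m and k = k, OF b_inj b_L k_less] by blast
    have "h n (k n) = \<sigma> n" for n
      unfolding k_def using \<sigma>[of n] by (rule f_inv_into_f)
    then have "g x = \<sigma>"
      using x(2) by (simp add: g_def fun_eq_iff)
    with x(1) show "\<sigma> \<in> g ` topspace (cantor_cube L)"
      by blast
  qed
  ultimately show thesis
    using that continuous_map_image_subset_topspace by blast
qed

text \<open>\<open>follow_seq s\<close> moves to the next term of \<open>s\<close> only if the jump is at most \<open>2 * (1/2)^n\<close>; so it is
  Cauchy for every \<open>s\<close>, with a rate independent of \<open>s\<close>, and equals \<open>s\<close> when \<open>s\<close> never jumps further.\<close>

fun follow_seq :: "(nat \<Rightarrow> 'a::metric_space) \<Rightarrow> nat \<Rightarrow> 'a" where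
  "follow_seq s 0 = s 0"
| "follow_seq s (Suc n) =
     (if dist (follow_seq s n) (s (Suc n)) \<le> 2 * (1/2)^n then s (Suc n) else follow_seq s n)"

lemma follow_seq_in: "(\<And>k. s k \<in> A) \<Longrightarrow> follow_seq s n \<in> A"
  by (induction n) auto

lemma follow_seq_cong: "(\<And>k. k \<le> n \<Longrightarrow> s k = s' k) \<Longrightarrow> follow_seq s n = follow_seq s' n"
  by (induction n) auto

lemma follow_seq_eq_self:
  assumes "\<And>k. dist (s k) (s (Suc k)) \<le> 2 * (1/2)^k"
  shows "follow_seq s n = s n"
  using assms by (induction n) auto

lemma dist_follow_seq_Suc: "dist (follow_seq s n) (follow_seq s (Suc n)) \<le> 2 * (1/2)^n"
  by simp

lemma dist_follow_seq_le:
  assumes "n \<le> k"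
  shows "dist (follow_seq s n) (follow_seq s k) \<le> 4 * (1/2)^n"
proof -
  have "dist (follow_seq s n) (follow_seq s (n + j)) \<le> 4 * (1/2)^n - 4 * (1/2)^(n + j)" for j
  proof (induction j)
    case (Suc j)
    have "dist (follow_seq s n) (follow_seq s (n + Suc j))
        \<le> dist (follow_seq s n) (follow_seq s (n + j)) + dist (follow_seq s (n + j)) (follow_seq s (Suc (n + j)))"
      by (simp add: dist_triangle)
    also have "\<dots> \<le> 4 * (1/2)^n - 4 * (1/2)^(n + j) + 2 * (1/2)^(n + j)"
      using Suc dist_follow_seq_Suc[of s "n + j"] by linarith
    finally show ?case
      by simp
  qed simp
  from this[of "k - n"] assms
  have "dist (follow_seq s n) (follow_seq s k) \<le> 4 * (1/2)^n - 4 * (1/2)^k"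
    by simp
  moreover have "(0::real) \<le> (1/2)^k"
    by simp
  ultimately show ?thesis
    by linarith
qed

lemma Cauchy_follow_seq: "Cauchy (follow_seq s)"
proof (rule metric_CauchyI)
  fix e :: real assume "e > 0"
  then obtain M where M: "(1/2::real)^M < e/8"
    using real_arch_pow_inv[of "e/8" "1/2::real"] by auto
  have "dist (follow_seq s m) (follow_seq s n) < e" if "m \<ge> M" "n \<ge> M" for m n
  proof -
    have "dist (follow_seq s m) (follow_seq s n)
        \<le> dist (follow_seq s M) (follow_seq s m) + dist (follow_seq s M) (follow_seq s n)"
      by (rule dist_triangle3)
    also have "\<dots> \<le> 8 * (1/2)^M"
      using dist_follow_seq_le[OF that(1), of s] dist_follow_seq_le[OF that(2), of s] by linarith
    finally show ?thesis
      using M by simp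
  qed
  then show "\<exists>M. \<forall>m\<ge>M. \<forall>n\<ge>M. dist (follow_seq s m) (follow_seq s n) < e"
    by blast
qed

lemma follow_seq_limit:
  assumes "complete Y" "\<And>k. s k \<in> Y"
  shows "follow_seq s \<longlonglongrightarrow> lim (follow_seq s)" and "lim (follow_seq s) \<in> Y"
proof -
  obtain l where "l \<in> Y" "follow_seq s \<longlonglongrightarrow> l"
    using assms Cauchy_follow_seq follow_seq_in unfolding complete_def by blast
  then show "follow_seq s \<longlonglongrightarrow> lim (follow_seq s)" "lim (follow_seq s) \<in> Y"
    by (auto simp: limI)
qed

lemma dist_follow_seq_lim_le:
  assumes "complete Y" "\<And>k. s k \<in> Y"
  shows "dist (follow_seq s n) (lim (follow_seq s)) \<le> 4 * (1/2)^n"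
proof (rule LIMSEQ_le_const2)
  show "(\<lambda>k. dist (follow_seq s n) (follow_seq s k)) \<longlonglongrightarrow> dist (follow_seq s n) (lim (follow_seq s))"
    using follow_seq_limit(1)[OF assms] by (intro tendsto_intros)
qed (use dist_follow_seq_le in blast)

lemma continuous_map_lim_follow_seq:
  fixes F :: "nat \<Rightarrow> 'a::metric_space set"
  defines "P \<equiv> product_topology (\<lambda>n. discrete_topology (F n)) UNIV"
  assumes Y: "complete Y" "\<And>n. F n \<subseteq> Y"
  shows "continuous_map P euclidean (\<lambda>\<sigma>. lim (follow_seq \<sigma>))"
proof -
  have in_Y: "\<sigma> k \<in> Y" if "\<sigma> \<in> topspace P" for \<sigma> k
    using that Y(2) by (auto simp: P_def PiE_iff)
  have close: "dist (follow_seq \<sigma> n) (lim (follow_seq \<sigma>)) \<le> 4 * (1/2)^n" if "\<sigma> \<in> topspace P" for \<sigma> n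
    using dist_follow_seq_lim_le[OF Y(1), of \<sigma> n] in_Y[OF that] by blast
  have "continuous_map P Met_TC.mtopology (\<lambda>\<sigma>. lim (follow_seq \<sigma>))"
  proof (rule Met_TC.continuous_map_uniform_limit[where F = sequentially])
    have "continuous_map P euclidean (\<lambda>\<sigma>. follow_seq \<sigma> n)" for n
      unfolding P_def
      by (rule continuous_map_discrete_product_finitely_determined[where T = "{..n}"])
         (auto intro: follow_seq_cong)
    then show "\<forall>\<^sub>F n in sequentially. continuous_map P Met_TC.mtopology (\<lambda>\<sigma>. follow_seq \<sigma> n)"
      by simp
  next
    fix \<epsilon> :: real assume "\<epsilon> > 0"
    have "(\<lambda>n. 4 * (1/2::real)^n) \<longlonglongrightarrow> 0"
      by (intro tendsto_mult_right_zero LIMSEQ_realpow_zero) auto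
    then have "\<forall>\<^sub>F n in sequentially. 4 * (1/2::real)^n < \<epsilon>"
      using \<open>\<epsilon> > 0\<close> by (rule order_tendstoD)
    then show "\<forall>\<^sub>F n in sequentially. \<forall>\<sigma>\<in>topspace P.
        lim (follow_seq \<sigma>) \<in> UNIV \<and> dist (follow_seq \<sigma> n) (lim (follow_seq \<sigma>)) < \<epsilon>"
    proof (rule eventually_mono)
      fix n assume n: "4 * (1/2::real)^n < \<epsilon>"
      show "\<forall>\<sigma>\<in>topspace P. lim (follow_seq \<sigma>) \<in> UNIV \<and> dist (follow_seq \<sigma> n) (lim (follow_seq \<sigma>)) < \<epsilon>"
        using close[of _ n] n by fastforce
    qed
  qed simp
  then show ?thesis
    by simp
qed

lemma lim_follow_seq_image:
  fixes F :: "nat \<Rightarrow> 'a::metric_space set"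
  defines "P \<equiv> product_topology (\<lambda>n. discrete_topology (F n)) UNIV"
  assumes Y: "complete Y" "\<And>n. F n \<subseteq> Y" and net: "\<And>n. Y \<subseteq> (\<Union>z\<in>F n. ball z ((1/2)^n))"
  shows "(\<lambda>\<sigma>. lim (follow_seq \<sigma>)) ` topspace P = Y"
proof
  show "(\<lambda>\<sigma>. lim (follow_seq \<sigma>)) ` topspace P \<subseteq> Y"
    using follow_seq_limit(2)[OF Y(1)] Y(2) by (force simp: P_def PiE_iff)
next
  show "Y \<subseteq> (\<lambda>\<sigma>. lim (follow_seq \<sigma>)) ` topspace P"
  proof
    fix y assume "y \<in> Y"
    then have "\<forall>n. \<exists>z \<in> F n. dist z y < (1/2)^n"
      using net by (fastforce simp: subset_eq)
    then obtain z where z: "\<And>n. z n \<in> F n" "\<And>n. dist (z n) y < (1/2)^n"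
      by metis
    have "dist (z n) (z (Suc n)) \<le> 2 * (1/2)^n" for n
    proof -
      have "(1/2::real)^Suc n \<le> (1/2)^n"
        by simp
      then show ?thesis
        using dist_triangle2[of "z n" "z (Suc n)" y] z(2)[of n] z(2)[of "Suc n"] by linarith
    qed
    then have "follow_seq z = z"
      using follow_seq_eq_self by blast
    moreover have "z \<longlonglongrightarrow> y"
    proof (rule tendsto_dist_iff[THEN iffD2], rule Lim_null_comparison)
      show "\<forall>\<^sub>F n in sequentially. norm (dist (z n) y) \<le> (1/2)^n"
        using z(2) by (simp add: less_imp_le)
    qed (rule LIMSEQ_realpow_zero, auto)
    ultimately have "lim (follow_seq z) = y"
      by (simp add: limI)
    moreover have "z \<in> topspace P"
      using z(1) by (simp add: P_def PiE_UNIV_domain)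
    ultimately show "y \<in> (\<lambda>\<sigma>. lim (follow_seq \<sigma>)) ` topspace P"
      by blast
  qed
qed

lemma cantor_cube_onto_compact:
  fixes c :: "nat \<Rightarrow> 'i" and Y :: "'a::metric_space set"
  assumes c: "inj c" "range c \<subseteq> L" and Y: "compact Y" "Y \<noteq> {}"
  obtains G where "continuous_map (cantor_cube L) euclidean G" "G ` topspace (cantor_cube L) = Y"
proof -
  have "\<forall>n. \<exists>F. finite F \<and> F \<subseteq> Y \<and> Y \<subseteq> (\<Union>z\<in>F. ball z ((1/2::real)^n))"
    using seq_compact_imp_totally_bounded[OF compact_imp_seq_compact[OF Y(1)]] by simp
  then obtain F where F: "\<And>n. finite (F n)" "\<And>n. F n \<subseteq> Y" "\<And>n. Y \<subseteq> (\<Union>z\<in>F n. ball z ((1/2)^n))"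
    by metis
  have F_ne: "F n \<noteq> {}" for n
    using F(3)[of n] Y(2) by auto
  obtain g where g: "continuous_map (cantor_cube L) (product_topology (\<lambda>n. discrete_topology (F n)) UNIV) g"
    "g ` topspace (cantor_cube L) = topspace (product_topology (\<lambda>n. discrete_topology (F n)) UNIV)"
    by (rule cantor_cube_onto_product_of_finite[OF c F(1) F_ne])
  have "complete Y"
    using Y(1) by (rule compact_imp_complete)
  show thesis
  proof
    show "continuous_map (cantor_cube L) euclidean ((\<lambda>\<sigma>. lim (follow_seq \<sigma>)) \<circ> g)"
      using g(1) continuous_map_lim_follow_seq[OF \<open>complete Y\<close> F(2)] by (rule continuous_map_compose)
    show "((\<lambda>\<sigma>. lim (follow_seq \<sigma>)) \<circ> g) ` topspace (cantor_cube L) = Y"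
      unfolding image_comp[symmetric] g(2) by (rule lim_follow_seq_image[OF \<open>complete Y\<close> F(2,3)])
  qed
qed

theorem mainTheorem3:
  fixes L :: "'i set" and Y :: "'a::metric_space set"
  assumes "\<exists>f::real \<Rightarrow> 'i. inj f \<and> range f \<subseteq> L"
    and "dendrite Y"
  shows "\<exists>D. upper_semicontinuous_decomposition (cantor_cube L) D \<and>
             decomposition_topology (cantor_cube L) D homeomorphic_space subtopology euclidean Y \<and>
             metrizable_space (decomposition_topology (cantor_cube L) D) \<and>
             \<not> metrizable_space (cantor_cube L)"
proof -
  obtain f :: "real \<Rightarrow> 'i" where f: "inj f" "range f \<subseteq> L"
    using assms(1) by blast
  have "uncountable L"
  proof
    assume "countable L"
    then have "countable (range f)"
      using f(2) by (rule countable_subset[rotated])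
    then have "countable (UNIV :: real set)"
      using f(1) by (rule countable_image_inj_on)
    then show False
      using uncountable_UNIV_real by blast
  qed
  have c: "inj (f \<circ> real)" "range (f \<circ> real) \<subseteq> L"
    using inj_compose[OF f(1) inj_of_nat] f(2) by auto
  have Y: "compact Y" "Y \<noteq> {}"
    using assms(2) by (auto simp: dendrite_def)
  obtain G where G: "continuous_map (cantor_cube L) euclidean G" "G ` topspace (cantor_cube L) = Y"
    by (rule cantor_cube_onto_compact[OF c Y])
  then have cont: "continuous_map (cantor_cube L) (subtopology euclidean Y) G"
    by (simp add: continuous_map_in_subtopology flip: image_subset_iff_funcset)
  have Hausdorff: "Hausdorff_space (subtopology euclidean Y)"
    by (simp add: Hausdorff_space_subtopology)
  have "quotient_map (cantor_cube L) (subtopology euclidean Y) G"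
    by (rule continuous_imp_quotient_map[OF cont compact_space_cantor_cube Hausdorff]) (simp add: G(2))
  then have hom: "decomposition_topology (cantor_cube L) (fibre_decomposition (cantor_cube L) G)
      homeomorphic_space subtopology euclidean Y"
    by (rule homeomorphic_space_fibre_decomposition)
  have "closed_map (cantor_cube L) (subtopology euclidean Y) G"
    by (rule continuous_imp_closed_map[OF cont compact_space_cantor_cube Hausdorff])
  with cont have usc: "upper_semicontinuous_decomposition (cantor_cube L) (fibre_decomposition (cantor_cube L) G)"
    by (rule upper_semicontinuous_fibre_decomposition)
  have metrizable: "metrizable_space (decomposition_topology (cantor_cube L) (fibre_decomposition (cantor_cube L) G))"
    unfolding homeomorphic_metrizable_space[OF hom]
    by (rule metrizable_space_subtopology[OF metrizable_space_euclidean])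
  show ?thesis
    using conjI[OF usc conjI[OF hom conjI[OF metrizable not_metrizable_cantor_cube[OF \<open>uncountable L\<close>]]]]
    by (rule exI)
qed

end
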